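(* Let $X$ be a real Banach space, let $\{T_n:X\rightrightarrows X^*\}_{n\in\mathbb{N}}$ be a sequence of maximal monotone operators of type (D), and let $(\varepsilon_n)_n$ be any sequence of positive numbers converging to zero. Let $T=\liminf T_n$. Then for $(x,x^* )\in X\times X^*$, $(x,x^* )\in T$ if and only if $x=\lim_n x_n$ (in norm), where for each $n$, $x_n\in X$ is a solution of $x^*\in T_n(x_n)+J_{\varepsilon_n}(x_n-x)$.
   Context: Operators are identified with their graphs; $\langle\cdot,\cdot\rangle$ is the duality pairing and $X\subset X^{**}$ canonically. $T:X\rightrightarrows X^*$ is monotone if $\langle x-y,x^*-y^*\rangle\ge0$ for all $(x,x^* ),(y,y^* )\in T$; maximal monotone if not properly contained in another monotone operator. For maximal monotone $T$, $\widetilde T=\{(x^{**},x^* )\in X^{**}\times X^*: \langle x^{**}-y,x^*-y^*\rangle\ge 0\ \forall (y,y^* )\in T\}$; $T$ is of type (D) if each $(x^{**},x^* )\in\widetilde T$ is the weak$^*\times$norm limit of a bounded net in $T$. $J_\varepsilon=\partial_\varepsilon(\tfrac12\|\cdot\|^2)$: $w^*\in J_\varepsilon(y)$ iff $\tfrac12\|y\|^2+\tfrac12\|w^*\|^2\le\langle y,w^*\rangle+\varepsilon$. (For type (D) operators such solutions $x_n$ always exist.) The sequential lower limit is $\liminf T_n=\{(x,x^* ): \exists (y_n,y_n^* )\in T_n,\ (y_n,y_n^* )\to(x,x^* ) \text{ in the norm}\times\text{norm topology}\}$. The equivalence is understood for any choice of solutions $x_n$. *)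

theory Defs
  imports "HOL-Analysis.Analysis"
begin

(* Operators X \<rightrightarrows> Xdual are identified with their graphs, subsets of X \<times> Xdual,
  where the dual Xdual is the space of bounded linear functionals 'a \<Rightarrow>\<^sub>L real
  (with the operator norm). *)

definition monotone_op :: "('a::real_normed_vector \<times> ('a \<Rightarrow>\<^sub>L real)) set \<Rightarrow> bool" where
  "monotone_op T \<longleftrightarrow>
     (\<forall>(x, xs) \<in> T. \<forall>(y, ys) \<in> T. blinfun_apply (xs - ys) (x - y) \<ge> 0)"

definition maximal_monotone :: "('a::real_normed_vector \<times> ('a \<Rightarrow>\<^sub>L real)) set \<Rightarrow> bool" where
  "maximal_monotone T \<longleftrightarrow>
     monotone_op T \<and> (\<forall>S. monotone_op S \<and> T \<subseteq> S \<longrightarrow> S = T)"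

(* The enlargement \<widetilde>T in Xbidual \<times> Xdual; the bidual is ('a \<Rightarrow>\<^sub>L real) \<Rightarrow>\<^sub>L real
  and \<langle>xbb - y, xd - yd\<rangle> = xbb(xd - yd) - (xd - yd)(y) (canonical embedding of y). *)
definition tilde_op :: "('a::real_normed_vector \<times> ('a \<Rightarrow>\<^sub>L real)) set
    \<Rightarrow> ((('a \<Rightarrow>\<^sub>L real) \<Rightarrow>\<^sub>L real) \<times> ('a \<Rightarrow>\<^sub>L real)) set" where
  "tilde_op T = {(xss, xs). \<forall>(y, ys) \<in> T.
       blinfun_apply xss (xs - ys) - blinfun_apply (xs - ys) y \<ge> 0}"

(* Type (D): every element of \<widetilde>T is the weak-star\<times>norm limit of a bounded net in T.
  A net in T is represented by the (proper) filter it induces on X \<times> Xdual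
  (its push-forward), which is eventually in T and eventually norm-bounded. *)
definition type_D :: "('a::real_normed_vector \<times> ('a \<Rightarrow>\<^sub>L real)) set \<Rightarrow> bool" where
  "type_D T \<longleftrightarrow>
     (\<forall>(xss, xs) \<in> tilde_op T.
        \<exists>F :: ('a \<times> ('a \<Rightarrow>\<^sub>L real)) filter. \<exists>M.
          F \<noteq> bot \<and>
          eventually (\<lambda>p. p \<in> T) F \<and>
          eventually (\<lambda>p. norm (fst p) \<le> M \<and> norm (snd p) \<le> M) F \<and>
          (\<forall>\<phi>. ((\<lambda>p. blinfun_apply \<phi> (fst p)) \<longlongrightarrow> blinfun_apply xss \<phi>) F) \<and>
          (snd \<longlongrightarrow> xs) F)"

(* J_\<epsilon>(y) = \<partial>_\<epsilon>(\<frac>12\<parallel>\<cdot>\<parallel>^2)(y). *)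
definition J_eps :: "real \<Rightarrow> 'a::real_normed_vector \<Rightarrow> ('a \<Rightarrow>\<^sub>L real) set" where
  "J_eps \<epsilon> y = {ws. (1/2) * (norm y)^2 + (1/2) * (norm ws)^2 \<le> blinfun_apply ws y + \<epsilon>}"

definition liminf_op :: "(nat \<Rightarrow> ('a::real_normed_vector \<times> ('a \<Rightarrow>\<^sub>L real)) set)
    \<Rightarrow> ('a \<times> ('a \<Rightarrow>\<^sub>L real)) set" where
  "liminf_op T = {(x, xs). \<exists>y ys. (\<forall>n. (y n, ys n) \<in> T n) \<and> y \<longlonglongrightarrow> x \<and> ys \<longlonglongrightarrow> xs}"

end

theory Submission
  imports Defs
begin

text \<open>If \<open>x\<^sub>n\<close> solves \<open>x\<^sup>* \<in> T\<^sub>n(x\<^sub>n) + J\<^sub>\<epsilon>\<^sub>n(x\<^sub>n - x)\<close>, write \<open>x\<^sup>* = y\<^sub>n\<^sup>* + w\<^sub>n\<^sup>*\<close>.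
  The defining inequality of \<open>J\<^sub>\<epsilon>\<close> gives \<open>\<parallel>w\<^sub>n\<^sup>*\<parallel> \<le> \<parallel>x\<^sub>n - x\<parallel> + o(1)\<close>, so \<open>x\<^sub>n \<rightarrow> x\<close>
  forces \<open>y\<^sub>n\<^sup>* \<rightarrow> x\<^sup>*\<close> and hence \<open>(x, x\<^sup>*) \<in> liminf T\<^sub>n\<close>. Conversely, if \<open>(y\<^sub>n, y\<^sub>n\<^sup>*) \<in> T\<^sub>n\<close>
  converge to \<open>(x, x\<^sup>*)\<close>, monotonicity of \<open>T\<^sub>n\<close> tested against \<open>(x\<^sub>n, x\<^sup>* - w\<^sub>n\<^sup>*)\<close>, combined
  with the \<open>J\<^sub>\<epsilon>\<close>-inequality, bounds \<open>\<parallel>x\<^sub>n - x\<parallel>\<close> by a quantity tending to zero.\<close>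

lemma le_plus_sqrt_if_half_squares_le:
  fixes u w a b e :: real
  assumes "(1/2) * u\<^sup>2 + (1/2) * w\<^sup>2 \<le> b * u + b * a + w * a + e"
  shows "u \<le> b + sqrt ((a + b)\<^sup>2 + 2 * e)"
proof -
  have "(u - b)\<^sup>2 + (w - a)\<^sup>2 \<le> (a + b)\<^sup>2 + 2 * e"
    using assms by (simp add: power2_eq_square algebra_simps)
  then have "(u - b)\<^sup>2 \<le> (a + b)\<^sup>2 + 2 * e"
    using zero_le_power2[of "w - a"] by linarith
  then have "u - b \<le> sqrt ((a + b)\<^sup>2 + 2 * e)"
    by (rule real_le_rsqrt)
  then show ?thesis by simp
qed

lemma blinfun_apply_le_norm:
  "blinfun_apply (f :: 'a::real_normed_vector \<Rightarrow>\<^sub>L real) v \<le> norm f * norm v"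
  using norm_blinfun[of f v] by simp

lemma norm_le_of_mem_J_eps:
  assumes "ws \<in> J_eps \<epsilon> y"
  shows "norm ws \<le> norm y + sqrt ((norm y)\<^sup>2 + 2 * \<epsilon>)"
proof -
  have "(1/2) * (norm ws)\<^sup>2 + (1/2) * (norm y)\<^sup>2 \<le> norm y * norm ws + \<epsilon>"
    using assms blinfun_apply_le_norm[of ws y] unfolding J_eps_def by (simp add: mult.commute)
  then show ?thesis
    using le_plus_sqrt_if_half_squares_le[of "norm ws" "norm y" "norm y" 0 \<epsilon>] by simp
qed

lemma norm_le_of_monotone_J_eps:
  assumes mono: "monotone_op T"
    and sol: "(z, zs) \<in> T" "xs - zs \<in> J_eps \<epsilon> (z - x)"
    and "(y, ys) \<in> T"
  shows "norm (z - x) \<le> norm (xs - ys) + sqrt ((norm (y - x) + norm (xs - ys))\<^sup>2 + 2 * \<epsilon>)"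
proof -
  define v w where "v = xs - ys" and "w = xs - zs"
  have "0 \<le> blinfun_apply (zs - ys) (z - y)"
    using mono sol(1) \<open>(y, ys) \<in> T\<close> unfolding monotone_op_def by fast
  also have "\<dots> = blinfun_apply (v - w) ((z - x) - (y - x))"
    unfolding v_def w_def by (simp add: algebra_simps)
  finally have "blinfun_apply w (z - x)
      \<le> blinfun_apply v (z - x) - blinfun_apply v (y - x) + blinfun_apply w (y - x)"
    by (simp add: blinfun.diff_left blinfun.diff_right)
  moreover have "- blinfun_apply v (y - x) \<le> norm v * norm (y - x)"
    using norm_blinfun[of v "y - x"] by simp
  moreover have "(1/2) * (norm (z - x))\<^sup>2 + (1/2) * (norm w)\<^sup>2 \<le> blinfun_apply w (z - x) + \<epsilon>"
    using sol(2) unfolding w_def J_eps_def by simp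
  ultimately have "(1/2) * (norm (z - x))\<^sup>2 + (1/2) * (norm w)\<^sup>2
      \<le> norm v * norm (z - x) + norm v * norm (y - x) + norm w * norm (y - x) + \<epsilon>"
    using blinfun_apply_le_norm[of v "z - x"] blinfun_apply_le_norm[of w "y - x"] by linarith
  then show ?thesis
    unfolding v_def by (rule le_plus_sqrt_if_half_squares_le)
qed

lemma plus_sqrt_tendsto_zero:
  fixes b c e :: "nat \<Rightarrow> real"
  assumes "b \<longlonglongrightarrow> 0" "c \<longlonglongrightarrow> 0" "e \<longlonglongrightarrow> 0"
  shows "(\<lambda>n. b n + sqrt ((c n)\<^sup>2 + 2 * e n)) \<longlonglongrightarrow> 0"
proof -
  have "(\<lambda>n. b n + sqrt ((c n)\<^sup>2 + 2 * e n)) \<longlonglongrightarrow> 0 + sqrt (0\<^sup>2 + 2 * 0)"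
    by (intro tendsto_intros assms)
  then show ?thesis by simp
qed

theorem proposition3p2:
  fixes T :: "nat \<Rightarrow> ('a::banach \<times> ('a \<Rightarrow>\<^sub>L real)) set"
    and \<epsilon> :: "nat \<Rightarrow> real"
    and x :: 'a and xs :: "'a \<Rightarrow>\<^sub>L real"
    and xn :: "nat \<Rightarrow> 'a"
  assumes "\<And>n. maximal_monotone (T n)"
    and "\<And>n. type_D (T n)"
    and "\<And>n. \<epsilon> n > 0"
    and "\<epsilon> \<longlonglongrightarrow> 0"
    and "\<And>n. \<exists>ys. (xn n, ys) \<in> T n \<and> xs - ys \<in> J_eps (\<epsilon> n) (xn n - x)"
  shows "(x, xs) \<in> liminf_op T \<longleftrightarrow> xn \<longlonglongrightarrow> x"
proof -
  obtain ys where sol: "\<And>n. (xn n, ys n) \<in> T n" "\<And>n. xs - ys n \<in> J_eps (\<epsilon> n) (xn n - x)"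
    using assms(5) by metis
  have mono: "\<And>n. monotone_op (T n)"
    using assms(1) unfolding maximal_monotone_def by blast
  show ?thesis
  proof
    assume "(x, xs) \<in> liminf_op T"
    then obtain y ys' where y: "\<And>n. (y n, ys' n) \<in> T n" "y \<longlonglongrightarrow> x" "ys' \<longlonglongrightarrow> xs"
      unfolding liminf_op_def by blast
    have bound: "norm (xn n - x) \<le> norm (xs - ys' n)
        + sqrt ((norm (y n - x) + norm (xs - ys' n))\<^sup>2 + 2 * \<epsilon> n)" for n
      using norm_le_of_monotone_J_eps[OF mono sol y(1)] .
    have y_lim: "(\<lambda>n. norm (y n - x)) \<longlonglongrightarrow> 0"
      using \<open>y \<longlonglongrightarrow> x\<close> by (intro tendsto_norm_zero LIM_zero)
    have ys_lim: "(\<lambda>n. norm (xs - ys' n)) \<longlonglongrightarrow> 0"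
      using tendsto_norm_zero[OF LIM_zero[OF y(3)]] by (subst norm_minus_commute)
    have "(\<lambda>n. xn n - x) \<longlonglongrightarrow> 0"
      using always_eventually[OF allI[OF bound]]
        plus_sqrt_tendsto_zero[OF ys_lim tendsto_add_zero[OF y_lim ys_lim] assms(4)]
      by (rule Lim_null_comparison)
    then show "xn \<longlonglongrightarrow> x"
      by (simp add: LIM_zero_iff)
  next
    assume "xn \<longlonglongrightarrow> x"
    then have xn_lim: "(\<lambda>n. norm (xn n - x)) \<longlonglongrightarrow> 0"
      by (intro tendsto_norm_zero LIM_zero)
    have "(\<lambda>n. xs - ys n) \<longlonglongrightarrow> 0"
      using always_eventually[OF allI[OF norm_le_of_mem_J_eps[OF sol(2)]]]
        plus_sqrt_tendsto_zero[OF xn_lim xn_lim assms(4)]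
      by (rule Lim_null_comparison)
    then have "ys \<longlonglongrightarrow> xs"
      using tendsto_diff[OF tendsto_const[of xs]] by fastforce
    then show "(x, xs) \<in> liminf_op T"
      unfolding liminf_op_def using sol(1) \<open>xn \<longlonglongrightarrow> x\<close> by blast
  qed
qed

end
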